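(* Let $n\geq3$ be an integer and $f\in\mathcal A_h(\mathbb F_n)$. For every $(\theta,\omega)\in\mathbb F_n$, the map $t\in(0,+\infty)\mapsto(f\circ\delta_t)(\theta,\omega)$ is a polynomial of degree $\leq n$. Denoting its coefficients by $f_j(\theta,\omega):=\frac1{j!}\frac{d^j}{dt^j}(f\circ\delta_t)(\theta,\omega)\big|_{t=0}$, $j\in\{0,\dots,n\}$, we have: (i) $f_0,\dots,f_n\in\mathcal A_h(\mathbb F_n)$; (ii) $f=\sum_{j=0}^n f_j$; (iii) for each $k\in\{0,\dots,\lfloor n/2\rfloor\}$ there are $a_I\in\mathbb R$, $I\in\mathcal I_k^n$, such that $f_{2k}(\theta,\omega)=\sum_{I\in\mathcal I^n_k}a_I\,\omega_I$ for all $(\theta,\omega)\in\mathbb F_n$; (iv) for each $k\in\{0,\dots,\lfloor (n-1)/2\rfloor\}$ there are linear maps $b_I:\Lambda^1(\mathbb R^n)\to\mathbb R$, $I\in\mathcal I_k^n$, such that $f_{2k+1}(\theta,\omega)=\sum_{I\in\mathcal I_k^n}b_I(\theta)\,\omega_I$ for all $(\theta,\omega)\in\mathbb F_n$.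
   Context: $\mathbb F_n=\Lambda^1(\mathbb R^n)\times\Lambda^2(\mathbb R^n)$ ($\Lambda^k(\mathbb R^n)$ = alternating $k$-forms on $\mathbb R^n$) with group law $(\theta,\omega)\cdot(\theta',\omega')=(\theta+\theta',\omega+\omega'+\theta\wedge\theta')$, and $\delta_t(\theta,\omega)=(t\theta,t^2\omega)$ for $t>0$. $f\in\mathcal A_h(\mathbb F_n)$ means that for all $(\theta,\omega)\in\mathbb F_n$, $\theta'\in\Lambda^1(\mathbb R^n)$, $t\in\mathbb R\mapsto f((\theta,\omega)\cdot(t\theta',0))$ is affine. Fix a basis $dx_1,\dots,dx_n$ of $\Lambda^1(\mathbb R^n)$ and write $\omega=\sum_{1\le\alpha<\beta\le n}\omega_{\alpha\beta}\,dx_\alpha\wedge dx_\beta$. Set $\mathcal I^n_0=\{\emptyset\}$ and, for $k\geq1$, $\mathcal I^n_k$ the set of $k$-tuples $I=(\alpha_1\beta_1,\dots,\alpha_k\beta_k)$ of pairs with $1\le\alpha_i<\beta_i\le n$, strictly increasing in lexicographic order, and with $\{\alpha_i,\beta_i\}\cap\{\alpha_j,\beta_j\}=\emptyset$ for $i\ne j$. Set $\omega_\emptyset=1$ and $\omega_I=\omega_{\alpha_1\beta_1}\cdots\omega_{\alpha_k\beta_k}$. *)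

theory Defs
  imports Main "HOL.Real"
begin

text \<open>Coordinates w.r.t. the basis dx_1,...,dx_n: a 1-form theta is the function
  i \<mapsto> theta_i, supported in {1..n}; a 2-form omega is the function
  (a,b) \<mapsto> omega_ab, supported on pairs 1 \<le> a < b \<le> n.\<close>

type_synonym form1 = "nat \<Rightarrow> real"
type_synonym form2 = "nat \<Rightarrow> nat \<Rightarrow> real"
type_synonym fpt = "form1 \<times> form2"

definition L1 :: "nat \<Rightarrow> form1 set" where
  "L1 n = {\<theta>. \<forall>i. \<theta> i \<noteq> 0 \<longrightarrow> 1 \<le> i \<and> i \<le> n}"

definition L2 :: "nat \<Rightarrow> form2 set" where
  "L2 n = {\<omega>. \<forall>a b. \<omega> a b \<noteq> 0 \<longrightarrow> 1 \<le> a \<and> a < b \<and> b \<le> n}"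

definition Fn :: "nat \<Rightarrow> fpt set" where
  "Fn n = L1 n \<times> L2 n"

definition wedge :: "form1 \<Rightarrow> form1 \<Rightarrow> form2" where
  "wedge \<theta> \<theta>' = (\<lambda>a b. if a < b then \<theta> a * \<theta>' b - \<theta> b * \<theta>' a else 0)"

definition fmult :: "fpt \<Rightarrow> fpt \<Rightarrow> fpt" where
  "fmult p q = ((\<lambda>i. fst p i + fst q i), (\<lambda>a b. snd p a b + snd q a b + wedge (fst p) (fst q) a b))"

definition dil :: "real \<Rightarrow> fpt \<Rightarrow> fpt" where
  "dil t p = ((\<lambda>i. t * fst p i), (\<lambda>a b. t^2 * snd p a b))"

definition Ah :: "nat \<Rightarrow> (fpt \<Rightarrow> real) \<Rightarrow> bool" where
  "Ah n f \<longleftrightarrow> (\<forall>p \<in> Fn n. \<forall>\<theta>' \<in> L1 n. \<exists>c0 c1. \<forall>t::real.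
      f (fmult p ((\<lambda>i. t * \<theta>' i), (\<lambda>a b. 0))) = c0 + c1 * t)"

definition lin1 :: "nat \<Rightarrow> (form1 \<Rightarrow> real) \<Rightarrow> bool" where
  "lin1 n b \<longleftrightarrow> (\<forall>\<theta> \<in> L1 n. \<forall>\<theta>' \<in> L1 n. \<forall>c::real.
      b (\<lambda>i. \<theta> i + \<theta>' i) = b \<theta> + b \<theta>' \<and> b (\<lambda>i. c * \<theta> i) = c * b \<theta>)"

definition lexless :: "nat \<times> nat \<Rightarrow> nat \<times> nat \<Rightarrow> bool" where
  "lexless p q \<longleftrightarrow> fst p < fst q \<or> (fst p = fst q \<and> snd p < snd q)"

definition Iset :: "nat \<Rightarrow> nat \<Rightarrow> (nat \<times> nat) list set" where
  "Iset n k = {I. length I = k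
      \<and> (\<forall>p \<in> set I. 1 \<le> fst p \<and> fst p < snd p \<and> snd p \<le> n)
      \<and> sorted_wrt lexless I
      \<and> (\<forall>i < k. \<forall>j < k. i \<noteq> j \<longrightarrow>
            {fst (I!i), snd (I!i)} \<inter> {fst (I!j), snd (I!j)} = {})}"

definition omegaI :: "form2 \<Rightarrow> (nat \<times> nat) list \<Rightarrow> real" where
  "omegaI \<omega> I = prod_list (map (\<lambda>p. \<omega> (fst p) (snd p)) I)"

end

theory Submission
  imports Defs Complex_Main "HOL-Library.Product_Lexorder"
begin

(* Fix two 1-forms x, y and a 2-form \<omega>. The points (s x + t y, \<omega> + z x\<and>y) form a copy of the
   Heisenberg group, and an h-affine f restricted to it is affine along horizontal lines and, by a
   midpoint argument, along the centre; such a function is affine in (s, t, z). In particular f is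
   affine in each coordinate \<omega>_ab separately, so f(\<theta>, \<omega>) = \<Sum>_S \<omega>_S c_S(\<theta>) with Moebius
   coefficients c_S. A pair of index pairs sharing an index spans a decomposable 2-form, which kills
   c_S unless S is a matching; and c_S(\<theta>) is affine in \<theta> with a linear part vanishing on dx_i for
   every index i covered by S. Since \<delta>_t multiplies \<omega>_S by t^(2|S|) and turns c_S(\<theta>) into
   c_S(0) + t (c_S(\<theta>) - c_S(0)), this gives the coefficients f_2k and f_2k+1; they are h-affine
   because \<delta>_t maps horizontal lines to horizontal lines. *)

section \<open>Affine functions on the Heisenberg group\<close>

lemma affine_if_affine_on_lines_2d:
  fixes B :: "real \<Rightarrow> real \<Rightarrow> real"
  assumes line: "\<And>s t \<alpha> \<beta> u. B (s + u * \<alpha>) (t + u * \<beta>) = (1 - u) * B s t + u * B (s + \<alpha>) (t + \<beta>)"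
  shows "B s t = B 0 0 + s * (B 1 0 - B 0 0) + t * (B 0 1 - B 0 0)"
proof -
  have row: "B s t = (1 - s) * B 0 t + s * B 1 t" for s t
    using line[of 0 s 1 t 0] by simp
  have col: "B c t = (1 - t) * B c 0 + t * B c 1" for c t
    using line[of c t 0 0 1] by simp
  have "B 2 2 = 2 * B 1 1 - B 0 0"
    using line[of 0 2 1 0 1] by simp
  then have corner: "B 1 1 = B 1 0 + B 0 1 - B 0 0"
    using row[of 2 2] col[of 0 2] col[of 1 2] by simp
  have "B s t = (1 - s) * ((1 - t) * B 0 0 + t * B 0 1) + s * ((1 - t) * B 1 0 + t * B 1 1)"
    using row[of s t] col[of 0 t] col[of 1 t] by simp
  then show ?thesis
    unfolding corner by (simp add: algebra_simps)
qed

text \<open>In the coordinates (s, t, z) with group law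
  (s, t, z) (\<alpha>, \<beta>, \<gamma>) = (s + \<alpha>, t + \<beta>, z + \<gamma> + s \<beta> - t \<alpha>), the hypotheses say that g is affine
  along the horizontal lines u \<mapsto> (s, t, z) (u \<alpha>, u \<beta>, 0) and along the centre.\<close>

lemma heisenberg_affine:
  fixes g :: "real \<Rightarrow> real \<Rightarrow> real \<Rightarrow> real"
  assumes horizontal: "\<And>s t z \<alpha> \<beta> u. g (s + u * \<alpha>) (t + u * \<beta>) (z + u * (s * \<beta> - t * \<alpha>))
      = (1 - u) * g s t z + u * g (s + \<alpha>) (t + \<beta>) (z + (s * \<beta> - t * \<alpha>))"
    and vertical: "\<And>s t z u. g s t (z + u) = (1 - u) * g s t z + u * g s t (z + 1)"
  shows "g s t z
    = g 0 0 0 + s * (g 1 0 0 - g 0 0 0) + t * (g 0 1 0 - g 0 0 0) + z * (g 0 0 1 - g 0 0 0)"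
proof -
  define A where "A s t = g s t 0" for s t
  define B where "B s t = g s t 1 - g s t 0" for s t
  have g_AB: "g s t z = A s t + z * B s t" for s t z
    using vertical[of s t 0 z] by (simp add: A_def B_def algebra_simps)
  have B_lines: "B (s + u * \<alpha>) (t + u * \<beta>) = (1 - u) * B s t + u * B (s + \<alpha>) (t + \<beta>)"
    for s t \<alpha> \<beta> u
    using horizontal[of s u \<alpha> t \<beta> 1] horizontal[of s u \<alpha> t \<beta> 0]
    by (simp add: g_AB algebra_simps)
  define b1 where "b1 = B 1 0 - B 0 0"
  define b2 where "b2 = B 0 1 - B 0 0"
  have B_affine: "B s t = B 0 0 + s * b1 + t * b2" for s t
    unfolding b1_def b2_def by (rule affine_if_affine_on_lines_2d[where B = B, OF B_lines])
  (* A is affine along lines only up to the quadratic correction below; evaluating it along the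
     coordinate lines and the two diagonals forces b1 = b2 = 0. *)
  have A_lines: "A (s + u * \<alpha>) (t + u * \<beta>) = (1 - u) * A s t + u * A (s + \<alpha>) (t + \<beta>)
      + u * (1 - u) * (s * \<beta> - t * \<alpha>) * (b1 * \<alpha> + b2 * \<beta>)" for s t \<alpha> \<beta> u
  proof -
    have "A (s + u * \<alpha>) (t + u * \<beta>) = (1 - u) * A s t
        + u * (A (s + \<alpha>) (t + \<beta>) + (s * \<beta> - t * \<alpha>) * B (s + \<alpha>) (t + \<beta>))
        - u * (s * \<beta> - t * \<alpha>) * B (s + u * \<alpha>) (t + u * \<beta>)"
      using horizontal[of s u \<alpha> t \<beta> 0] by (simp add: g_AB algebra_simps)
    then show ?thesis
      unfolding B_affine[of "s + \<alpha>" "t + \<beta>"] B_affine[of "s + u * \<alpha>" "t + u * \<beta>"]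
      by (simp add: algebra_simps)
  qed
  have row: "A s t = (1 - s) * A 0 t + s * A 1 t - s * (1 - s) * t * b1" for s t
    using A_lines[of 0 s 1 t 0] by (simp add: algebra_simps)
  have col: "A c t = (1 - t) * A c 0 + t * A c 1 + t * (1 - t) * c * b2" for c t
    using A_lines[of c t 0 0 1] by (simp add: algebra_simps)
  have diag: "A u u = (1 - u) * A 0 0 + u * A 1 1" for u
    using A_lines[of 0 u 1 0 1] by simp
  have antidiag: "A u (- u) = (1 - u) * A 0 0 + u * A 1 (- 1)" for u
    using A_lines[of 0 u 1 0 "- 1"] by simp
  have b: "b1 = 0" "b2 = 0" and corner: "A 1 1 = A 1 0 + A 0 1 - A 0 0"
    using diag[of 2] diag[of 3] antidiag[of 2] row[of 2 2] row[of 3 3] row[of 2 "- 2"]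
      col[of 0 2] col[of 1 2] col[of 0 3] col[of 1 3] col[of 0 "- 2"] col[of 1 "- 2"]
      col[of 1 "- 1"]
    by simp_all
  have "A s t = (1 - s) * ((1 - t) * A 0 0 + t * A 0 1) + s * ((1 - t) * A 1 0 + t * A 1 1)"
    using row[of s t] col[of 0 t] col[of 1 t] b by simp
  then have "A s t = A 0 0 + s * (A 1 0 - A 0 0) + t * (A 0 1 - A 0 0)"
    unfolding corner by (simp add: algebra_simps)
  then show ?thesis
    using B_affine[of s t] by (simp add: g_AB b)
qed

section \<open>Horizontal and central affinity of h-affine functions\<close>

lemma L1_iff: "\<theta> \<in> L1 n \<longleftrightarrow> (\<forall>i. i < 1 \<or> n < i \<longrightarrow> \<theta> i = 0)"
  unfolding L1_def by (auto simp: not_less) (metis Suc_leI gr0I)+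

lemma L2_iff: "\<omega> \<in> L2 n \<longleftrightarrow> (\<forall>a b. \<not> (1 \<le> a \<and> a < b \<and> b \<le> n) \<longrightarrow> \<omega> a b = 0)"
  unfolding L2_def by auto

lemma L1_scale [simp]: "x \<in> L1 n \<Longrightarrow> (\<lambda>i. c * x i) \<in> L1 n"
  and L1_add [simp]: "x \<in> L1 n \<Longrightarrow> y \<in> L1 n \<Longrightarrow> (\<lambda>i. x i + y i) \<in> L1 n"
  and L1_diff [simp]: "x \<in> L1 n \<Longrightarrow> y \<in> L1 n \<Longrightarrow> (\<lambda>i. x i - y i) \<in> L1 n"
  and L1_add_scale [simp]: "x \<in> L1 n \<Longrightarrow> y \<in> L1 n \<Longrightarrow> (\<lambda>i. x i + c * y i) \<in> L1 n"
  and L1_lincomb [simp]: "x \<in> L1 n \<Longrightarrow> y \<in> L1 n \<Longrightarrow> (\<lambda>i. a * x i + b * y i) \<in> L1 n"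
  by (auto simp: L1_iff)

lemma L2_scale [simp]: "\<omega> \<in> L2 n \<Longrightarrow> (\<lambda>a b. c * \<omega> a b) \<in> L2 n"
  by (auto simp: L2_iff)

lemma wedge_L2 [simp]: "x \<in> L1 n \<Longrightarrow> y \<in> L1 n \<Longrightarrow> wedge x y \<in> L2 n"
  unfolding L2_iff L1_iff wedge_def
  by (metis (no_types, lifting) linorder_not_less mult_eq_0_iff diff_self)

lemma L2_add_wedge [simp]:
  "\<omega> \<in> L2 n \<Longrightarrow> x \<in> L1 n \<Longrightarrow> y \<in> L1 n \<Longrightarrow> (\<lambda>a b. \<omega> a b + c * wedge x y a b) \<in> L2 n"
  "\<omega> \<in> L2 n \<Longrightarrow> x \<in> L1 n \<Longrightarrow> y \<in> L1 n \<Longrightarrow> (\<lambda>a b. \<omega> a b + wedge x y a b) \<in> L2 n"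
  "\<omega> \<in> L2 n \<Longrightarrow> x \<in> L1 n \<Longrightarrow> y \<in> L1 n \<Longrightarrow> (\<lambda>a b. \<omega> a b - wedge x y a b) \<in> L2 n"
  using wedge_L2[of x n y] by (auto simp: L2_iff)

lemma fmult_horizontal:
  "fmult (\<theta>, \<omega>) (\<lambda>i. u * v i, \<lambda>a b. 0) = (\<lambda>i. \<theta> i + u * v i, \<lambda>a b. \<omega> a b + u * wedge \<theta> v a b)"
  by (simp add: fmult_def wedge_def fun_eq_iff algebra_simps)

lemma Ah_on_line:
  assumes "Ah n f" "\<theta> \<in> L1 n" "\<omega> \<in> L2 n" "v \<in> L1 n"
  shows "f (\<lambda>i. \<theta> i + u * v i, \<lambda>a b. \<omega> a b + u * wedge \<theta> v a b)
       = (1 - u) * f (\<theta>, \<omega>) + u * f (\<lambda>i. \<theta> i + v i, \<lambda>a b. \<omega> a b + wedge \<theta> v a b)"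
proof -
  obtain c0 c1 where "\<And>t. f (fmult (\<theta>, \<omega>) (\<lambda>i. t * v i, \<lambda>a b. 0)) = c0 + c1 * t"
    using assms unfolding Ah_def Fn_def by blast
  then have line: "f (\<lambda>i. \<theta> i + t * v i, \<lambda>a b. \<omega> a b + t * wedge \<theta> v a b) = c0 + c1 * t" for t
    by (simp add: fmult_horizontal)
  show ?thesis
    using line[of u] line[of 0] line[of 1] by (simp add: algebra_simps)
qed

lemma Ah_central_affine:
  assumes f: "Ah n f" and \<theta>: "\<theta> \<in> L1 n" and \<omega>: "\<omega> \<in> L2 n" and x: "x \<in> L1 n" and y: "y \<in> L1 n"
  shows "f (\<theta>, \<lambda>a b. \<omega> a b + c * wedge x y a b)
       = (1 - c) * f (\<theta>, \<omega>) + c * f (\<theta>, \<lambda>a b. \<omega> a b + wedge x y a b)"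
proof -
  define \<theta>p where "\<theta>p = (\<lambda>i. \<theta> i + x i)"
  define \<omega>p where "\<omega>p = (\<lambda>a b. \<omega> a b + wedge \<theta> x a b)"
  define \<theta>m where "\<theta>m = (\<lambda>i. \<theta> i + (- 1) * x i)"
  define \<omega>m where "\<omega>m = (\<lambda>a b. \<omega> a b + (- 1) * wedge \<theta> x a b)"
  have ends: "\<theta>p \<in> L1 n" "\<omega>p \<in> L2 n" "\<theta>m \<in> L1 n" "\<omega>m \<in> L2 n"
    using \<theta> \<omega> x by (simp_all add: \<theta>p_def \<omega>p_def \<theta>m_def \<omega>m_def)
  (* (\<theta>, \<omega> + d x\<and>y) is the midpoint of the horizontal segment through it in direction x + d y,
     and as d varies the two endpoints run along horizontal lines in direction y. *)
  have midpoint: "2 * f (\<theta>, \<lambda>a b. \<omega> a b + d * wedge x y a b)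
      = f (\<lambda>i. \<theta>p i + d * y i, \<lambda>a b. \<omega>p a b + d * wedge \<theta>p y a b)
      + f (\<lambda>i. \<theta>m i + (- d) * y i, \<lambda>a b. \<omega>m a b + (- d) * wedge \<theta>m y a b)" for d
  proof -
    let ?\<omega> = "\<lambda>a b. \<omega> a b + d * wedge x y a b" and ?v = "\<lambda>i. x i + d * y i"
    have "f (\<lambda>i. \<theta> i + (- 1) * ?v i, \<lambda>a b. ?\<omega> a b + (- 1) * wedge \<theta> ?v a b)
        = 2 * f (\<theta>, ?\<omega>) - f (\<lambda>i. \<theta> i + ?v i, \<lambda>a b. ?\<omega> a b + wedge \<theta> ?v a b)"
      using Ah_on_line[OF f \<theta> _ L1_add_scale[OF x y, of d], of ?\<omega> "- 1"] \<omega> x y by simp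
    moreover have "(\<lambda>i. \<theta> i + ?v i, \<lambda>a b. ?\<omega> a b + wedge \<theta> ?v a b)
        = (\<lambda>i. \<theta>p i + d * y i, \<lambda>a b. \<omega>p a b + d * wedge \<theta>p y a b)"
      by (simp add: \<theta>p_def \<omega>p_def wedge_def fun_eq_iff algebra_simps)
    moreover have "(\<lambda>i. \<theta> i + (- 1) * ?v i, \<lambda>a b. ?\<omega> a b + (- 1) * wedge \<theta> ?v a b)
        = (\<lambda>i. \<theta>m i + (- d) * y i, \<lambda>a b. \<omega>m a b + (- d) * wedge \<theta>m y a b)"
      by (simp add: \<theta>m_def \<omega>m_def wedge_def fun_eq_iff algebra_simps)
    ultimately show ?thesis
      by simp
  qed
  define K where "K = f (\<lambda>i. \<theta>p i + y i, \<lambda>a b. \<omega>p a b + wedge \<theta>p y a b) - f (\<theta>p, \<omega>p)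
      + f (\<theta>m, \<omega>m) - f (\<lambda>i. \<theta>m i + y i, \<lambda>a b. \<omega>m a b + wedge \<theta>m y a b)"
  have affine: "2 * f (\<theta>, \<lambda>a b. \<omega> a b + d * wedge x y a b) = 2 * f (\<theta>, \<omega>) + d * K" for d
    using midpoint[of d] midpoint[of 0] Ah_on_line[OF f ends(1,2) y, of d]
      Ah_on_line[OF f ends(3,4) y, of "- d"]
    unfolding K_def by (simp add: algebra_simps)
  have K: "K = 2 * f (\<theta>, \<lambda>a b. \<omega> a b + wedge x y a b) - 2 * f (\<theta>, \<omega>)"
    using affine[of 1] by simp
  show ?thesis
    using affine[of c] unfolding K by (simp add: algebra_simps)
qed

definition heis_slice :: "(fpt \<Rightarrow> real) \<Rightarrow> form1 \<Rightarrow> form1 \<Rightarrow> form2 \<Rightarrow> real \<Rightarrow> real \<Rightarrow> real \<Rightarrow> real"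
  where "heis_slice f x y \<omega> s t z = f (\<lambda>i. s * x i + t * y i, \<lambda>a b. \<omega> a b + z * wedge x y a b)"

lemma Ah_heis_slice_affine:
  assumes f: "Ah n f" and \<omega>: "\<omega> \<in> L2 n" and x: "x \<in> L1 n" and y: "y \<in> L1 n"
  defines "g \<equiv> heis_slice f x y \<omega>"
  shows "g s t z
    = g 0 0 0 + s * (g 1 0 0 - g 0 0 0) + t * (g 0 1 0 - g 0 0 0) + z * (g 0 0 1 - g 0 0 0)"
proof (rule heisenberg_affine)
  fix s t z \<alpha> \<beta> u :: real
  let ?\<theta> = "\<lambda>i. s * x i + t * y i" and ?\<omega> = "\<lambda>a b. \<omega> a b + z * wedge x y a b"
    and ?v = "\<lambda>i. \<alpha> * x i + \<beta> * y i"
  have members: "?\<theta> \<in> L1 n" "?\<omega> \<in> L2 n" "?v \<in> L1 n"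
    using \<omega> x y by simp_all
  have points: "(\<lambda>i. ?\<theta> i + r * ?v i) = (\<lambda>i. (s + r * \<alpha>) * x i + (t + r * \<beta>) * y i)"
    "(\<lambda>a b. ?\<omega> a b + r * wedge ?\<theta> ?v a b)
      = (\<lambda>a b. \<omega> a b + (z + r * (s * \<beta> - t * \<alpha>)) * wedge x y a b)" for r
    by (simp_all add: wedge_def fun_eq_iff algebra_simps)
  show "g (s + u * \<alpha>) (t + u * \<beta>) (z + u * (s * \<beta> - t * \<alpha>))
      = (1 - u) * g s t z + u * g (s + \<alpha>) (t + \<beta>) (z + (s * \<beta> - t * \<alpha>))"
    using Ah_on_line[OF f members, of u]
    unfolding points[of u] points[of 1, simplified] by (simp add: g_def heis_slice_def)
next
  fix s t z u :: real
  show "g s t (z + u) = (1 - u) * g s t z + u * g s t (z + 1)"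
    using Ah_central_affine[OF f _ _ x y,
        of "\<lambda>i. s * x i + t * y i" "\<lambda>a b. \<omega> a b + z * wedge x y a b" u] \<omega> x y
    by (simp add: g_def heis_slice_def algebra_simps)
qed

lemma Ah_horizontal_add:
  assumes "Ah n f" "\<omega> \<in> L2 n" "x \<in> L1 n" "y \<in> L1 n"
  shows "f (\<lambda>i. x i + y i, \<omega>) = f (x, \<omega>) + f (y, \<omega>) - f (\<lambda>i. 0, \<omega>)"
  using Ah_heis_slice_affine[OF assms, of 1 1 0] by (simp add: heis_slice_def)

lemma Ah_horizontal_scale:
  assumes "Ah n f" "\<omega> \<in> L2 n" "x \<in> L1 n"
  shows "f (\<lambda>i. c * x i, \<omega>) = (1 - c) * f (\<lambda>i. 0, \<omega>) + c * f (x, \<omega>)"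
  using Ah_heis_slice_affine[OF assms assms(3), of c 0 0]
  by (simp add: heis_slice_def algebra_simps)

lemma Ah_horizontal_diff_add_wedge:
  assumes "Ah n f" "\<omega> \<in> L2 n" "x \<in> L1 n" "y \<in> L1 n" and "\<theta> = x \<or> \<theta> = y"
  shows "f (\<theta>, \<lambda>a b. \<omega> a b + wedge x y a b) - f (\<lambda>i. 0, \<lambda>a b. \<omega> a b + wedge x y a b)
       = f (\<theta>, \<omega>) - f (\<lambda>i. 0, \<omega>)"
  using Ah_heis_slice_affine[OF assms(1-4), of 1 0 1] Ah_heis_slice_affine[OF assms(1-4), of 0 1 1]
    assms(5)
  by (auto simp: heis_slice_def)

lemma Ah_mixed_difference_wedges:
  assumes f: "Ah n f" and \<theta>: "\<theta> \<in> L1 n" and \<omega>: "\<omega> \<in> L2 n"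
    and x: "x \<in> L1 n" "y \<in> L1 n" "x' \<in> L1 n" "y' \<in> L1 n" "x'' \<in> L1 n" "y'' \<in> L1 n"
    and sum: "wedge x'' y'' = (\<lambda>a b. wedge x y a b + wedge x' y' a b)"
  shows "f (\<theta>, \<lambda>a b. \<omega> a b + wedge x y a b + wedge x' y' a b) - f (\<theta>, \<lambda>a b. \<omega> a b + wedge x y a b)
     - f (\<theta>, \<lambda>a b. \<omega> a b + wedge x' y' a b) + f (\<theta>, \<omega>) = 0"
proof -
  define F where "F c c' = f (\<theta>, \<lambda>a b. \<omega> a b + c * wedge x y a b + c' * wedge x' y' a b)" for c c'
  have affine1: "F c c' = (1 - c) * F 0 c' + c * F 1 c'" for c c'
    using Ah_central_affine[OF f \<theta> _ x(1,2), of "\<lambda>a b. \<omega> a b + c' * wedge x' y' a b" c] \<omega> x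
    by (simp add: F_def add_ac)
  have affine2: "F c c' = (1 - c') * F c 0 + c' * F c 1" for c c'
    using Ah_central_affine[OF f \<theta> _ x(3,4), of "\<lambda>a b. \<omega> a b + c * wedge x y a b" c'] \<omega> x
    by (simp add: F_def add_ac)
  have diagonal: "F c c = (1 - c) * F 0 0 + c * F 1 1" for c
    using Ah_central_affine[OF f \<theta> \<omega> x(5,6), of c] unfolding sum by (simp add: F_def algebra_simps)
  have "F 1 1 - F 1 0 - F 0 1 + F 0 0 = 0"
    using affine1[of "- 1" "- 1"] affine2[of 0 "- 1"] affine2[of 1 "- 1"] diagonal[of "- 1"] by simp
  then show ?thesis
    by (simp add: F_def)
qed

section \<open>Separately affine functions\<close>

definition separately_affine :: "(('a \<Rightarrow> real) \<Rightarrow> real) \<Rightarrow> bool" where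
  "separately_affine F \<longleftrightarrow> (\<forall>x q u. F (x(q := u)) = (1 - u) * F (x(q := 0)) + u * F (x(q := 1)))"

lemma separately_affine_fun_upd:
  assumes "separately_affine F"
  shows "separately_affine (\<lambda>y. F (y(q := c)))"
  unfolding separately_affine_def
proof (intro allI)
  fix y q' u
  show "F (y(q' := u, q := c)) = (1 - u) * F (y(q' := 0, q := c)) + u * F (y(q' := 1, q := c))"
  proof (cases "q' = q")
    case True
    then show ?thesis
      by (simp add: algebra_simps)
  next
    case False
    then have "y(q' := d, q := c) = (y(q := c))(q' := d)" for d
      by (rule fun_upd_twist)
    then show ?thesis
      using assms unfolding separately_affine_def by metis
  qed
qed

definition moebius :: "('a set \<Rightarrow> real) \<Rightarrow> 'a set \<Rightarrow> real" where
  "moebius h S = (\<Sum>T\<in>Pow S. (- 1) ^ card (S - T) * h T)"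

lemma sum_Pow_insert:
  assumes "finite S" "q \<notin> S"
  shows "(\<Sum>T\<in>Pow (insert q S). h T) = (\<Sum>T\<in>Pow S. h T) + (\<Sum>T\<in>Pow S. h (insert q T))"
proof -
  have "inj_on (insert q) (Pow S)"
    using assms(2) by (intro inj_onI) (metis PowD insert_ident subsetD)
  moreover have "Pow S \<inter> insert q ` Pow S = {}"
    using assms(2) by auto
  ultimately show ?thesis
    using assms(1) by (simp add: Pow_insert sum.union_disjoint sum.reindex)
qed

lemma moebius_cong: "(\<And>T. T \<subseteq> S \<Longrightarrow> h T = k T) \<Longrightarrow> moebius h S = moebius k S"
  by (simp add: moebius_def)

lemma moebius_add: "moebius (\<lambda>T. h T + k T) S = moebius h S + moebius k S"
  by (simp add: moebius_def sum.distrib distrib_left)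

lemma moebius_diff: "moebius (\<lambda>T. h T - k T) S = moebius h S - moebius k S"
  by (simp add: moebius_def sum_subtractf right_diff_distrib)

lemma moebius_scale: "moebius (\<lambda>T. c * h T) S = c * moebius h S"
  by (simp add: moebius_def sum_distrib_left algebra_simps)

lemma moebius_eq_0: "(\<And>T. T \<subseteq> S \<Longrightarrow> h T = 0) \<Longrightarrow> moebius h S = 0"
  by (simp add: moebius_def)

lemma moebius_insert:
  assumes "finite S" "q \<notin> S"
  shows "moebius h (insert q S) = moebius (\<lambda>T. h (insert q T) - h T) S"
proof -
  have "card (insert q S - T) = Suc (card (S - T))" if "T \<subseteq> S" for T
    using that assms by (subst insert_Diff_if) auto
  moreover have "insert q S - insert q T = S - T" if "T \<subseteq> S" for T
    using that assms by auto
  ultimately show ?thesis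
    using assms
    by (simp add: moebius_def sum_Pow_insert algebra_simps sum_subtractf flip: sum.distrib)
qed

lemma separately_affine_expansion:
  fixes F :: "('a \<Rightarrow> real) \<Rightarrow> real"
  assumes "separately_affine F" and "finite Q" and "\<And>p. p \<notin> Q \<Longrightarrow> x p = 0"
  shows "F x = (\<Sum>S\<in>Pow Q. (\<Prod>p\<in>S. x p) * moebius (\<lambda>T. F (\<lambda>p. of_bool (p \<in> T))) S)"
  using assms(2,1,3)
proof (induction Q arbitrary: F x rule: finite_induct)
  case empty
  then have "x = (\<lambda>p. 0)"
    by auto
  then show ?case
    by (simp add: moebius_def)
next
  case (insert q Q)
  let ?e = "\<lambda>T p. of_bool (p \<in> T) :: real"
  define x0 where "x0 = x(q := 0)"
  have x0: "\<And>p. p \<notin> Q \<Longrightarrow> x0 p = 0"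
    using insert.prems(2) by (auto simp: x0_def)
  have prod_x0: "prod x0 S = prod x S" if "S \<in> Pow Q" for S
    using that insert.hyps(2) by (intro prod.cong) (auto simp: x0_def)
  have at_0: "F x0 = (\<Sum>S\<in>Pow Q. (\<Prod>p\<in>S. x p) * moebius (\<lambda>T. F (?e T)) S)"
    using insert.IH[of F x0, OF insert.prems(1) x0] prod_x0 by simp
  have "(\<lambda>y. F (y(q := 1))) x0 = (\<Sum>S\<in>Pow Q. prod x0 S * moebius (\<lambda>T. F ((?e T)(q := 1))) S)"
    by (rule insert.IH[OF separately_affine_fun_upd[OF insert.prems(1)] x0])
  moreover have "(?e T)(q := 1) = ?e (insert q T)" for T
    by auto
  ultimately have at_1:
    "F (x(q := 1)) = (\<Sum>S\<in>Pow Q. (\<Prod>p\<in>S. x p) * moebius (\<lambda>T. F (?e (insert q T))) S)"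
    using prod_x0 by (simp add: x0_def)
  have step: "(\<Prod>p\<in>insert q S. x p) * moebius (\<lambda>T. F (?e T)) (insert q S)
      = x q * ((\<Prod>p\<in>S. x p) * (moebius (\<lambda>T. F (?e (insert q T))) S - moebius (\<lambda>T. F (?e T)) S))"
    if "S \<in> Pow Q" for S
  proof -
    have S: "finite S" "q \<notin> S"
      using that insert.hyps finite_subset[of S Q] by auto
    show ?thesis
      unfolding prod.insert[OF S] moebius_insert[OF S] moebius_diff by (rule mult.assoc)
  qed
  have "(\<Sum>S\<in>Pow (insert q Q). (\<Prod>p\<in>S. x p) * moebius (\<lambda>T. F (?e T)) S)
      = F x0 + (\<Sum>S\<in>Pow Q. (\<Prod>p\<in>insert q S. x p) * moebius (\<lambda>T. F (?e T)) (insert q S))"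
    using insert.hyps by (simp add: sum_Pow_insert at_0)
  also have "\<dots> = F x0 + x q * (F (x(q := 1)) - F x0)"
    by (simp add: step at_0 at_1 sum_distrib_left right_diff_distrib sum_subtractf)
  also have "\<dots> = F x"
    using insert.prems(1)[unfolded separately_affine_def, rule_format, of x q "x q"]
    unfolding fun_upd_triv x0_def by (simp add: algebra_simps del: fun_upd_apply)
  finally show ?case ..
qed

section \<open>Expansion in the coordinates of \<omega>\<close>

definition index_pairs :: "nat \<Rightarrow> (nat \<times> nat) set" where
  "index_pairs n = {p. 1 \<le> fst p \<and> fst p < snd p \<and> snd p \<le> n}"

definition dx :: "nat \<Rightarrow> form1" where
  "dx k = (\<lambda>i. of_bool (i = k))"

definition dx_wedges :: "(nat \<times> nat) set \<Rightarrow> form2" where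
  "dx_wedges T = (\<lambda>a b. of_bool ((a, b) \<in> T))"

definition omega_prod :: "form2 \<Rightarrow> (nat \<times> nat) set \<Rightarrow> real" where
  "omega_prod \<omega> S = (\<Prod>p\<in>S. \<omega> (fst p) (snd p))"

definition omega_coeff :: "(fpt \<Rightarrow> real) \<Rightarrow> form1 \<Rightarrow> (nat \<times> nat) set \<Rightarrow> real" where
  "omega_coeff f \<theta> S = moebius (\<lambda>T. f (\<theta>, dx_wedges T)) S"

lemma finite_index_pairs [simp]: "finite (index_pairs n)"
  by (rule finite_subset[of _ "{1..n} \<times> {1..n}"]) (auto simp: index_pairs_def)

lemma dx_L1: "1 \<le> k \<Longrightarrow> k \<le> n \<Longrightarrow> dx k \<in> L1 n"
  by (auto simp: L1_def dx_def)

lemma dx_pair_L1: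
  assumes "p \<in> index_pairs n"
  shows "dx (fst p) \<in> L1 n" "dx (snd p) \<in> L1 n"
  using assms by (auto simp: index_pairs_def intro!: dx_L1)

lemma dx_wedges_L2: "T \<subseteq> index_pairs n \<Longrightarrow> dx_wedges T \<in> L2 n"
  by (auto simp: L2_def dx_wedges_def index_pairs_def)

lemma dx_wedges_insert:
  assumes "p \<in> index_pairs n" "p \<notin> T"
  shows "dx_wedges (insert p T) = (\<lambda>a b. dx_wedges T a b + wedge (dx (fst p)) (dx (snd p)) a b)"
  using assms by (cases p) (auto simp: fun_eq_iff dx_wedges_def wedge_def dx_def index_pairs_def)

lemma Ah_separately_affine_coords:
  assumes f: "Ah n f" and \<theta>: "\<theta> \<in> L1 n"
  shows "separately_affine (\<lambda>x. f (\<theta>, \<lambda>a b. if (a, b) \<in> index_pairs n then x (a, b) else 0))"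
  unfolding separately_affine_def
proof (intro allI)
  fix x :: "nat \<times> nat \<Rightarrow> real" and q u
  let ?\<omega> = "\<lambda>c a b. if (a, b) \<in> index_pairs n then (x(q := c)) (a, b) else 0"
  show "f (\<theta>, ?\<omega> u) = (1 - u) * f (\<theta>, ?\<omega> 0) + u * f (\<theta>, ?\<omega> 1)"
  proof (cases "q \<in> index_pairs n")
    case True
    have "?\<omega> 0 \<in> L2 n"
      by (auto simp: L2_def index_pairs_def)
    moreover have \<omega>_c: "?\<omega> c = (\<lambda>a b. ?\<omega> 0 a b + c * wedge (dx (fst q)) (dx (snd q)) a b)" for c
      using True by (cases q) (auto simp: fun_eq_iff wedge_def dx_def index_pairs_def)
    ultimately show ?thesis
      using Ah_central_affine[OF f \<theta> _ dx_pair_L1[OF True], of "?\<omega> 0" u]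
      by (simp only: \<omega>_c[of u] \<omega>_c[of 1] mult_1)
  next
    case False
    then have "f (\<theta>, ?\<omega> c) = f (\<theta>, ?\<omega> 0)" for c
      by (intro arg_cong[where f = "\<lambda>\<omega>. f (\<theta>, \<omega>)"]) (auto simp: fun_eq_iff)
    then have "f (\<theta>, ?\<omega> u) = f (\<theta>, ?\<omega> 0)" "f (\<theta>, ?\<omega> 1) = f (\<theta>, ?\<omega> 0)"
      by blast+
    then show ?thesis
      by (simp only:) (simp add: algebra_simps)
  qed
qed

lemma Ah_expansion:
  assumes f: "Ah n f" and \<theta>: "\<theta> \<in> L1 n" and \<omega>: "\<omega> \<in> L2 n"
  shows "f (\<theta>, \<omega>) = (\<Sum>S\<in>Pow (index_pairs n). omega_prod \<omega> S * omega_coeff f \<theta> S)"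
proof -
  define F where "F x = f (\<theta>, \<lambda>a b. if (a, b) \<in> index_pairs n then x (a, b) else 0)"
    for x :: "nat \<times> nat \<Rightarrow> real"
  have "separately_affine F"
    unfolding F_def by (rule Ah_separately_affine_coords[OF f \<theta>])
  moreover have "\<And>p. p \<notin> index_pairs n \<Longrightarrow> (\<lambda>p. \<omega> (fst p) (snd p)) p = 0"
    using \<omega> by (auto simp: L2_def index_pairs_def)
  ultimately have "F (\<lambda>p. \<omega> (fst p) (snd p)) = (\<Sum>S\<in>Pow (index_pairs n).
      (\<Prod>p\<in>S. \<omega> (fst p) (snd p)) * moebius (\<lambda>T. F (\<lambda>p. of_bool (p \<in> T))) S)"
    by (rule separately_affine_expansion[OF _ finite_index_pairs])
  moreover have "F (\<lambda>p. \<omega> (fst p) (snd p)) = f (\<theta>, \<omega>)"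
    using \<omega> by (auto simp: F_def L2_iff index_pairs_def fun_eq_iff intro!: arg_cong[where f = f])
  moreover have "moebius (\<lambda>T. F (\<lambda>p. of_bool (p \<in> T))) S = omega_coeff f \<theta> S"
    if "S \<subseteq> index_pairs n" for S
    unfolding omega_coeff_def using that
    by (intro moebius_cong)
      (force simp: F_def dx_wedges_def fun_eq_iff intro!: arg_cong[where f = f])
  ultimately show ?thesis
    by (simp add: omega_prod_def)
qed

section \<open>Matchings\<close>

definition matching :: "nat \<Rightarrow> (nat \<times> nat) set \<Rightarrow> bool" where
  "matching n S \<longleftrightarrow> S \<subseteq> index_pairs n
     \<and> (\<forall>p\<in>S. \<forall>q\<in>S. p \<noteq> q \<longrightarrow> {fst p, snd p} \<inter> {fst q, snd q} = {})"

definition vertices :: "(nat \<times> nat) set \<Rightarrow> nat set" where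
  "vertices S = (\<Union>p\<in>S. {fst p, snd p})"

lemma finite_matching: "matching n S \<Longrightarrow> finite S"
  using finite_subset[OF _ finite_index_pairs] by (auto simp: matching_def)

lemma vertices_subset: "S \<subseteq> index_pairs n \<Longrightarrow> vertices S \<subseteq> {1..n}"
  by (auto simp: vertices_def index_pairs_def)

lemma card_vertices_matching:
  assumes "matching n S"
  shows "card (vertices S) = 2 * card S"
proof -
  have "card (vertices S) = (\<Sum>p\<in>S. card {fst p, snd p})"
    unfolding vertices_def
    by (rule card_UN_disjoint) (use finite_matching assms in \<open>auto simp: matching_def\<close>)
  also have "\<dots> = (\<Sum>p\<in>S. 2)"
    using assms by (intro sum.cong) (auto simp: matching_def index_pairs_def)
  finally show ?thesis
    by simp
qed

lemma matching_card_le: "matching n S \<Longrightarrow> 2 * card S \<le> n"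
  using card_vertices_matching[of n S] vertices_subset[of S n] card_mono[of "{1..n}" "vertices S"]
  by (simp add: matching_def)

lemma perfect_matching_vertices:
  assumes "matching n S" "n \<le> 2 * card S"
  shows "vertices S = {1..n}"
  using assms card_vertices_matching[OF assms(1)] vertices_subset[of S n]
    matching_card_le[OF assms(1)]
  by (intro card_subset_eq) (auto simp: matching_def)

lemma wedge_sum_decomposable:
  assumes "p \<in> index_pairs n" "q \<in> index_pairs n" "{fst p, snd p} \<inter> {fst q, snd q} \<noteq> {}"
  obtains x y where "x \<in> L1 n" "y \<in> L1 n"
    "wedge x y
      = (\<lambda>a b. wedge (dx (fst p)) (dx (snd p)) a b + wedge (dx (fst q)) (dx (snd q)) a b)"
proof -
  obtain a b c d where p: "p = (a, b)" and q: "q = (c, d)"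
    by (cases p, cases q)
  have dx: "dx a \<in> L1 n" "dx b \<in> L1 n" "dx c \<in> L1 n" "dx d \<in> L1 n"
    using dx_pair_L1[OF assms(1)] dx_pair_L1[OF assms(2)] unfolding p q by auto
  consider "a = c" | "b = d" | "b = c" | "a = d"
    using assms(3) unfolding p q by auto
  then show ?thesis
  proof cases
    case 1
    show ?thesis
      by (rule that[of "dx a" "\<lambda>i. dx b i + dx d i"])
        (use dx 1 in \<open>simp_all add: p q wedge_def fun_eq_iff algebra_simps\<close>)
  next
    case 2
    show ?thesis
      by (rule that[of "\<lambda>i. dx a i + dx c i" "dx b"])
        (use dx 2 in \<open>simp_all add: p q wedge_def fun_eq_iff algebra_simps\<close>)
  next
    case 3
    show ?thesis
      by (rule that[of "dx b" "\<lambda>i. dx d i - dx a i"])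
        (use dx 3 in \<open>simp_all add: p q wedge_def fun_eq_iff algebra_simps\<close>)
  next
    case 4
    show ?thesis
      by (rule that[of "dx a" "\<lambda>i. dx b i - dx c i"])
        (use dx 4 in \<open>simp_all add: p q wedge_def fun_eq_iff algebra_simps\<close>)
  qed
qed

lemma omega_coeff_eq_0_if_not_matching:
  assumes f: "Ah n f" and \<theta>: "\<theta> \<in> L1 n" and S: "S \<subseteq> index_pairs n" and "\<not> matching n S"
  shows "omega_coeff f \<theta> S = 0"
proof -
  obtain p q where pq: "p \<in> S" "q \<in> S" "p \<noteq> q"
    and shared: "{fst p, snd p} \<inter> {fst q, snd q} \<noteq> {}"
    using assms(4) S unfolding matching_def by blast
  then have p: "p \<in> index_pairs n" and q: "q \<in> index_pairs n"
    using S by auto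
  define R where "R = S - {p, q}"
  define h where "h T = f (\<theta>, dx_wedges T)" for T
  have R: "finite R" "q \<notin> R" "p \<notin> insert q R" and S_eq: "S = insert p (insert q R)"
    using pq finite_subset[OF S] by (auto simp: R_def)
  have "omega_coeff f \<theta> S
      = moebius (\<lambda>T. h (insert p (insert q T)) - h (insert q T) - (h (insert p T) - h T)) R"
    unfolding omega_coeff_def S_eq moebius_insert[OF finite_insert[THEN iffD2, OF R(1)] R(3)]
      moebius_insert[OF R(1,2)] h_def ..
  also have "\<dots> = 0"
  proof (rule moebius_eq_0)
    fix T assume "T \<subseteq> R"
    then have T: "T \<subseteq> index_pairs n" "p \<notin> T" "q \<notin> T"
      using S by (auto simp: R_def)
    obtain x y where xy: "x \<in> L1 n" "y \<in> L1 n" "wedge x y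
        = (\<lambda>a b. wedge (dx (fst p)) (dx (snd p)) a b + wedge (dx (fst q)) (dx (snd q)) a b)"
      using wedge_sum_decomposable[OF p q shared] by blast
    have "dx_wedges (insert p (insert q T)) = (\<lambda>a b. dx_wedges T a b
        + wedge (dx (fst p)) (dx (snd p)) a b + wedge (dx (fst q)) (dx (snd q)) a b)"
      using dx_wedges_insert[OF p, of "insert q T"] dx_wedges_insert[OF q T(3)] T(2) pq(3)
      by (simp add: fun_eq_iff add_ac)
    then show "h (insert p (insert q T)) - h (insert q T) - (h (insert p T) - h T) = 0"
      using Ah_mixed_difference_wedges[OF f \<theta> dx_wedges_L2[OF T(1)] dx_pair_L1[OF p]
          dx_pair_L1[OF q] xy]
      by (simp add: h_def dx_wedges_insert[OF p T(2)] dx_wedges_insert[OF q T(3)])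
  qed
  finally show ?thesis .
qed

lemma Ah_expansion_matchings:
  assumes f: "Ah n f" and \<theta>: "\<theta> \<in> L1 n" and \<omega>: "\<omega> \<in> L2 n"
  shows "f (\<theta>, \<omega>) = (\<Sum>S | matching n S. omega_prod \<omega> S * omega_coeff f \<theta> S)"
  unfolding Ah_expansion[OF assms]
  using omega_coeff_eq_0_if_not_matching[OF f \<theta>]
  by (intro sum.mono_neutral_right) (auto simp: matching_def)

lemma lexless_eq: "lexless = (<)"
  by (auto simp: fun_eq_iff lexless_def less_prod_def')

lemma IsetD:
  assumes "I \<in> Iset n k"
  shows "distinct I" "sorted I" "matching n (set I)" "card (set I) = k"
proof -
  have len: "length I = k"
    and range: "\<forall>p\<in>set I. 1 \<le> fst p \<and> fst p < snd p \<and> snd p \<le> n"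
    and strict: "sorted_wrt (<) I"
    and disjoint: "\<forall>i<k. \<forall>j<k. i \<noteq> j \<longrightarrow> {fst (I!i), snd (I!i)} \<inter> {fst (I!j), snd (I!j)} = {}"
    using assms by (auto simp: Iset_def lexless_eq)
  show "distinct I" "sorted I"
    using strict by (simp_all add: strict_sorted_iff)
  then show "card (set I) = k"
    using len by (simp add: distinct_card)
  show "matching n (set I)"
    unfolding matching_def
  proof (intro conjI ballI impI)
    show "set I \<subseteq> index_pairs n"
      using range by (auto simp: index_pairs_def)
  next
    fix p q assume "p \<in> set I" "q \<in> set I" "p \<noteq> q"
    then obtain i j where "i < k" "j < k" "i \<noteq> j" "p = I!i" "q = I!j"
      using len by (auto simp: in_set_conv_nth)
    then show "{fst p, snd p} \<inter> {fst q, snd q} = {}"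
      using disjoint by auto
  qed
qed

lemma sorted_list_of_matching_in_Iset:
  assumes m: "matching n S" and card: "card S = k"
  shows "sorted_list_of_set S \<in> Iset n k"
proof -
  define I where "I = sorted_list_of_set S"
  have I: "set I = S" "distinct I" "sorted I" "length I = k"
    using finite_matching[OF m] card by (simp_all add: I_def)
  have "I \<in> Iset n k"
    unfolding Iset_def lexless_eq
  proof (intro CollectI conjI allI impI)
    show "length I = k" "sorted_wrt (<) I"
      using I by (simp_all add: strict_sorted_iff)
    show "\<forall>p\<in>set I. 1 \<le> fst p \<and> fst p < snd p \<and> snd p \<le> n"
      using m I(1) by (auto simp: matching_def index_pairs_def)
    fix i j assume "i < k" "j < k" "i \<noteq> j"
    then have "I!i \<noteq> I!j" "I!i \<in> S" "I!j \<in> S"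
      using I by (auto simp: nth_eq_iff_index_eq)
    then show "{fst (I!i), snd (I!i)} \<inter> {fst (I!j), snd (I!j)} = {}"
      using m by (auto simp: matching_def)
  qed
  then show ?thesis
    by (simp add: I_def)
qed

lemma Iset_bij: "bij_betw set (Iset n k) {S. matching n S \<and> card S = k}"
  unfolding bij_betw_def
proof
  show "inj_on set (Iset n k)"
    by (rule inj_onI) (metis IsetD(1,2) sorted_distinct_set_unique)
  show "set ` Iset n k = {S. matching n S \<and> card S = k}"
  proof (intro equalityI subsetI)
    fix S assume "S \<in> {S. matching n S \<and> card S = k}"
    then have "S = set (sorted_list_of_set S)" "sorted_list_of_set S \<in> Iset n k"
      using finite_matching sorted_list_of_matching_in_Iset by auto
    then show "S \<in> set ` Iset n k"
      by blast
  qed (use IsetD in auto)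
qed

lemma sum_matchings_by_card:
  "(\<Sum>S | matching n S. h S) = (\<Sum>k\<le>n. \<Sum>I\<in>Iset n k. h (set I))"
proof -
  have "(\<Sum>S | matching n S. h S) = (\<Sum>k\<le>n. \<Sum>S\<in>{S \<in> {S. matching n S}. card S = k}. h S)"
  proof (rule sum.group[symmetric])
    show "finite {S. matching n S}"
      by (rule finite_subset[of _ "Pow (index_pairs n)"]) (auto simp: matching_def)
    show "card ` {S. matching n S} \<subseteq> {..n}"
      using matching_card_le by fastforce
  qed simp
  also have "\<dots> = (\<Sum>k\<le>n. \<Sum>I\<in>Iset n k. h (set I))"
    using sum.reindex_bij_betw[OF Iset_bij, of h] by simp
  finally show ?thesis .
qed

lemma omegaI_eq_omega_prod: "distinct I \<Longrightarrow> omegaI \<omega> I = omega_prod \<omega> (set I)"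
  by (simp add: omegaI_def omega_prod_def prod.distinct_set_conv_list)

section \<open>The linear part of the coefficients\<close>

definition lin_coeff :: "(fpt \<Rightarrow> real) \<Rightarrow> form1 \<Rightarrow> (nat \<times> nat) set \<Rightarrow> real" where
  "lin_coeff f \<theta> S = omega_coeff f \<theta> S - omega_coeff f (\<lambda>i. 0) S"

lemma lin_coeff_moebius:
  "lin_coeff f \<theta> S = moebius (\<lambda>T. f (\<theta>, dx_wedges T) - f (\<lambda>i. 0, dx_wedges T)) S"
  by (simp add: lin_coeff_def omega_coeff_def moebius_diff)

lemma lin1_lin_coeff:
  assumes f: "Ah n f" and S: "S \<subseteq> index_pairs n"
  shows "lin1 n (\<lambda>\<theta>. lin_coeff f \<theta> S)"
  unfolding lin1_def
proof (intro ballI allI conjI)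
  fix x y c assume x: "x \<in> L1 n" and y: "y \<in> L1 n"
  have T: "dx_wedges T \<in> L2 n" if "T \<subseteq> S" for T
    using that S by (auto intro: dx_wedges_L2)
  show "lin_coeff f (\<lambda>i. x i + y i) S = lin_coeff f x S + lin_coeff f y S"
    unfolding lin_coeff_moebius moebius_add[symmetric]
    by (rule moebius_cong) (simp add: Ah_horizontal_add[OF f T x y])
  show "lin_coeff f (\<lambda>i. c * x i) S = c * lin_coeff f x S"
    unfolding lin_coeff_moebius moebius_scale[symmetric]
    by (rule moebius_cong) (simp add: Ah_horizontal_scale[OF f T x] algebra_simps)
qed

lemma omega_coeff_scale:
  assumes "Ah n f" "S \<subseteq> index_pairs n" "\<theta> \<in> L1 n"
  shows "omega_coeff f (\<lambda>i. t * \<theta> i) S = omega_coeff f (\<lambda>i. 0) S + t * lin_coeff f \<theta> S"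
proof -
  have "lin_coeff f (\<lambda>i. t * \<theta> i) S = t * lin_coeff f \<theta> S"
    using lin1_lin_coeff[OF assms(1,2)] assms(3) unfolding lin1_def by blast
  then show ?thesis
    unfolding lin_coeff_def by linarith
qed

lemma lin1_expansion:
  assumes \<phi>: "lin1 n \<phi>" and \<theta>: "\<theta> \<in> L1 n"
  shows "\<phi> \<theta> = (\<Sum>i\<in>{1..n}. \<theta> i * \<phi> (dx i))"
proof -
  define trunc where "trunc m = (\<lambda>j. if j \<le> m then \<theta> j else 0)" for m
  have trunc_L1: "trunc m \<in> L1 n" for m
    using \<theta> by (auto simp: trunc_def L1_iff)
  have "\<phi> (trunc m) = (\<Sum>i\<in>{1..m}. \<theta> i * \<phi> (dx i))" if "m \<le> n" for m
    using that
  proof (induction m)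
    case 0
    have "trunc 0 = (\<lambda>j. 0 * \<theta> j)"
      using \<theta> by (auto simp: trunc_def fun_eq_iff L1_iff)
    moreover have "\<phi> (\<lambda>j. 0 * \<theta> j) = 0 * \<phi> \<theta>"
      using \<phi> \<theta> unfolding lin1_def by blast
    ultimately show ?case
      by simp
  next
    case (Suc m)
    have dx: "dx (Suc m) \<in> L1 n"
      using Suc.prems by (intro dx_L1) auto
    have "trunc (Suc m) = (\<lambda>j. trunc m j + \<theta> (Suc m) * dx (Suc m) j)"
      by (auto simp: trunc_def dx_def fun_eq_iff le_Suc_eq)
    then have "\<phi> (trunc (Suc m)) = \<phi> (trunc m) + \<theta> (Suc m) * \<phi> (dx (Suc m))"
      using \<phi> trunc_L1 dx unfolding lin1_def by simp
    then show ?case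
      using Suc by simp
  qed
  moreover have "trunc n = \<theta>"
    using \<theta> by (auto simp: trunc_def fun_eq_iff L1_iff)
  ultimately show ?thesis
    by auto
qed

lemma lin_coeff_dx_eq_0:
  assumes f: "Ah n f" and S: "S \<subseteq> index_pairs n" and i: "i \<in> vertices S"
  shows "lin_coeff f (dx i) S = 0"
proof -
  obtain p where p: "p \<in> S" and i_p: "i = fst p \<or> i = snd p"
    using i by (auto simp: vertices_def)
  have p_pair: "p \<in> index_pairs n"
    using S p by auto
  have S_eq: "S = insert p (S - {p})" and fin: "finite (S - {p})"
    using p finite_subset[OF S] by auto
  let ?h = "\<lambda>T. f (dx i, dx_wedges T) - f (\<lambda>i. 0, dx_wedges T)"
  have "lin_coeff f (dx i) S = moebius (\<lambda>T. ?h (insert p T) - ?h T) (S - {p})"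
    unfolding lin_coeff_moebius by (subst S_eq) (rule moebius_insert[OF fin], simp)
  also have "\<dots> = 0"
  proof (rule moebius_eq_0)
    fix T assume T: "T \<subseteq> S - {p}"
    then have "dx_wedges T \<in> L2 n" "p \<notin> T"
      using S by (auto intro: dx_wedges_L2)
    then show "?h (insert p T) - ?h T = 0"
      using Ah_horizontal_diff_add_wedge[OF f _ dx_pair_L1[OF p_pair]] i_p
      by (auto simp: dx_wedges_insert[OF p_pair])
  qed
  finally show ?thesis .
qed

lemma lin_coeff_eq_0_if_covering:
  assumes f: "Ah n f" and S: "S \<subseteq> index_pairs n" and \<theta>: "\<theta> \<in> L1 n" and "{1..n} \<subseteq> vertices S"
  shows "lin_coeff f \<theta> S = 0"
proof -
  have "lin_coeff f \<theta> S = (\<Sum>i\<in>{1..n}. \<theta> i * lin_coeff f (dx i) S)"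
    by (rule lin1_expansion[OF lin1_lin_coeff[OF f S] \<theta>])
  also have "\<dots> = 0"
    using assms(4) lin_coeff_dx_eq_0[OF f S] by (intro sum.neutral) auto
  finally show ?thesis .
qed

section \<open>Dilations\<close>

lemma omega_prod_scale: "finite S \<Longrightarrow> omega_prod (\<lambda>a b. c * \<omega> a b) S = c ^ card S * omega_prod \<omega> S"
  by (simp add: omega_prod_def prod.distrib)

lemma Ah_dil_expansion:
  assumes f: "Ah n f" and \<theta>: "\<theta> \<in> L1 n" and \<omega>: "\<omega> \<in> L2 n"
  shows "f (dil t (\<theta>, \<omega>)) = (\<Sum>S | matching n S.
      t ^ (2 * card S) * omega_prod \<omega> S * (omega_coeff f (\<lambda>i. 0) S + t * lin_coeff f \<theta> S))"
  unfolding dil_def fst_conv snd_conv Ah_expansion_matchings[OF f L1_scale[OF \<theta>] L2_scale[OF \<omega>]]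
proof (rule sum.cong[OF refl])
  fix S assume "S \<in> {S. matching n S}"
  then have "finite S" "S \<subseteq> index_pairs n"
    using finite_matching by (auto simp: matching_def)
  then show "omega_prod (\<lambda>a b. t\<^sup>2 * \<omega> a b) S * omega_coeff f (\<lambda>i. t * \<theta> i) S
      = t ^ (2 * card S) * omega_prod \<omega> S * (omega_coeff f (\<lambda>i. 0) S + t * lin_coeff f \<theta> S)"
    by (simp add: omega_prod_scale omega_coeff_scale[OF f _ \<theta>] power_mult)
qed

definition dil_coeff :: "(fpt \<Rightarrow> real) \<Rightarrow> nat \<Rightarrow> nat \<Rightarrow> fpt \<Rightarrow> real" where
  "dil_coeff f n j p =
    (if even j then (\<Sum>I\<in>Iset n (j div 2). omega_coeff f (\<lambda>i. 0) (set I) * omegaI (snd p) I)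
     else (\<Sum>I\<in>Iset n (j div 2). lin_coeff f (fst p) (set I) * omegaI (snd p) I))"

lemma dil_coeff_even:
  "dil_coeff f n (2 * k) p = (\<Sum>I\<in>Iset n k. omega_coeff f (\<lambda>i. 0) (set I) * omegaI (snd p) I)"
  by (simp add: dil_coeff_def)

lemma dil_coeff_odd:
  "dil_coeff f n (2 * k + 1) p = (\<Sum>I\<in>Iset n k. lin_coeff f (fst p) (set I) * omegaI (snd p) I)"
  by (simp add: dil_coeff_def)

lemma dil_coeff_eq_0:
  assumes f: "Ah n f" and p: "p \<in> Fn n" and "n < j"
  shows "dil_coeff f n j p = 0"
proof -
  have Iset: "matching n (set I)" "card (set I) = k" "2 * k \<le> n" if "I \<in> Iset n k" for I k
    using IsetD[OF that] matching_card_le by auto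
  consider k where "j = 2 * k" | k where "j = 2 * k + 1"
    by (metis oddE evenE)
  then show ?thesis
  proof cases
    case 1
    then have "Iset n k = {}"
      using \<open>n < j\<close> Iset(3) by fastforce
    then show ?thesis
      by (simp add: 1 dil_coeff_even)
  next
    case 2
    have "lin_coeff f (fst p) (set I) = 0" if "I \<in> Iset n k" for I
    proof (rule lin_coeff_eq_0_if_covering[OF f])
      show "set I \<subseteq> index_pairs n" "fst p \<in> L1 n"
        using Iset(1)[OF that] p by (auto simp: matching_def Fn_def)
      show "{1..n} \<subseteq> vertices (set I)"
        using perfect_matching_vertices Iset[OF that] 2 \<open>n < j\<close> by simp
    qed
    then show ?thesis
      unfolding 2 dil_coeff_odd by simp
  qed
qed

lemma Ah_dil_polynomial:
  assumes f: "Ah n f" and p: "p \<in> Fn n"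
  shows "f (dil t p) = (\<Sum>j\<le>n. dil_coeff f n j p * t ^ j)"
proof -
  obtain \<theta> \<omega> where p_eq: "p = (\<theta>, \<omega>)" and \<theta>: "\<theta> \<in> L1 n" and \<omega>: "\<omega> \<in> L2 n"
    using p by (cases p) (auto simp: Fn_def)
  have "f (dil t p) = (\<Sum>k\<le>n. \<Sum>I\<in>Iset n k. t ^ (2 * card (set I)) * omega_prod \<omega> (set I)
      * (omega_coeff f (\<lambda>i. 0) (set I) + t * lin_coeff f \<theta> (set I)))"
    unfolding p_eq Ah_dil_expansion[OF f \<theta> \<omega>] by (rule sum_matchings_by_card)
  also have "\<dots> = (\<Sum>k\<le>n. \<Sum>I\<in>Iset n k. omega_coeff f (\<lambda>i. 0) (set I) * omegaI \<omega> I * t ^ (2 * k)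
      + lin_coeff f \<theta> (set I) * omegaI \<omega> I * t ^ (2 * k + 1))"
    by (intro sum.cong refl) (simp add: IsetD omegaI_eq_omega_prod algebra_simps)
  also have "\<dots> = (\<Sum>k\<le>n. dil_coeff f n (2 * k) p * t ^ (2 * k)
      + dil_coeff f n (2 * k + 1) p * t ^ (2 * k + 1))"
    unfolding dil_coeff_even dil_coeff_odd p_eq by (simp add: sum.distrib sum_distrib_right)
  also have "\<dots> = (\<Sum>j\<le>2 * n + 1. dil_coeff f n j p * t ^ j)"
    using sum.in_pairs_0[of "\<lambda>j. dil_coeff f n j p * t ^ j" n] by simp
  also have "\<dots> = (\<Sum>j\<le>n. dil_coeff f n j p * t ^ j)"
    using dil_coeff_eq_0[OF f p] by (intro sum.mono_neutral_right) auto
  finally show ?thesis .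
qed

lemma Ah_dil_on_line:
  assumes f: "Ah n f" and \<theta>: "\<theta> \<in> L1 n" and \<omega>: "\<omega> \<in> L2 n" and v: "v \<in> L1 n"
  defines "q s \<equiv> (\<lambda>i. \<theta> i + s * v i, \<lambda>a b. \<omega> a b + s * wedge \<theta> v a b)"
  shows "f (dil t (q s)) = (1 - s) * f (dil t (q 0)) + s * f (dil t (q 1))"
proof -
  let ?\<theta> = "\<lambda>i. t * \<theta> i" and ?\<omega> = "\<lambda>a b. t\<^sup>2 * \<omega> a b"
  have dil_q: "dil t (q s) = (\<lambda>i. ?\<theta> i + (t * s) * v i, \<lambda>a b. ?\<omega> a b + (t * s) * wedge ?\<theta> v a b)"
    for s
    by (simp add: q_def dil_def wedge_def fun_eq_iff power2_eq_square algebra_simps)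
  define Z where "Z = f (\<lambda>i. ?\<theta> i + v i, \<lambda>a b. ?\<omega> a b + wedge ?\<theta> v a b)"
  have line: "f (dil t (q s)) = (1 - t * s) * f (?\<theta>, ?\<omega>) + (t * s) * Z" for s
    unfolding dil_q Z_def using \<theta> \<omega> by (intro Ah_on_line[OF f _ _ v]) simp_all
  have tZ: "t * Z = f (dil t (q 1)) - (1 - t) * f (?\<theta>, ?\<omega>)"
    using line[of 1] by simp
  have "f (dil t (q s)) = (1 - t * s) * f (?\<theta>, ?\<omega>) + s * (t * Z)"
    by (simp add: line mult_ac)
  also have "\<dots> = (1 - s) * f (?\<theta>, ?\<omega>) + s * f (dil t (q 1))"
    unfolding tZ by (simp add: algebra_simps)
  finally show ?thesis
    by (simp add: dil_q)
qed

lemma Ah_dil_coeff: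
  assumes f: "Ah n f" and "j \<le> n"
  shows "Ah n (dil_coeff f n j)"
  unfolding Ah_def
proof (intro ballI)
  fix p v assume p: "p \<in> Fn n" and v: "v \<in> L1 n"
  obtain \<theta> \<omega> where p_eq: "p = (\<theta>, \<omega>)" and \<theta>: "\<theta> \<in> L1 n" and \<omega>: "\<omega> \<in> L2 n"
    using p by (cases p) (auto simp: Fn_def)
  define q where "q s = (\<lambda>i. \<theta> i + s * v i, \<lambda>a b. \<omega> a b + s * wedge \<theta> v a b)" for s
  have q: "q s \<in> Fn n" for s
    using \<theta> \<omega> v by (simp add: q_def Fn_def)
  have "\<forall>t. (\<Sum>j\<le>n. dil_coeff f n j (q s) * t ^ j)
      = (\<Sum>j\<le>n. ((1 - s) * dil_coeff f n j (q 0) + s * dil_coeff f n j (q 1)) * t ^ j)" for s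
    using Ah_dil_on_line[OF f \<theta> \<omega> v] unfolding q_def[symmetric] Ah_dil_polynomial[OF f q]
    by (simp add: sum.distrib sum_distrib_left distrib_right mult.assoc)
  then have "dil_coeff f n j (q s) = (1 - s) * dil_coeff f n j (q 0) + s * dil_coeff f n j (q 1)"
    for s
    unfolding polyfun_eq_coeffs using \<open>j \<le> n\<close> by blast
  then show "\<exists>c0 c1. \<forall>s. dil_coeff f n j (fmult p (\<lambda>i. s * v i, \<lambda>a b. 0)) = c0 + c1 * s"
    by (intro exI[of _ "dil_coeff f n j (q 0)"]
        exI[of _ "dil_coeff f n j (q 1) - dil_coeff f n j (q 0)"])
      (simp add: p_eq fmult_horizontal q_def[symmetric] algebra_simps)
qed

theorem proposition4p2:
  fixes n :: nat and f :: "fpt \<Rightarrow> real"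
  assumes "n \<ge> 3" and "Ah n f"
  shows "\<exists>fs :: nat \<Rightarrow> fpt \<Rightarrow> real.
      (\<forall>p \<in> Fn n. \<forall>t::real. t > 0 \<longrightarrow> f (dil t p) = (\<Sum>j\<le>n. fs j p * t ^ j))
    \<and> (\<forall>j \<le> n. Ah n (fs j))
    \<and> (\<forall>p \<in> Fn n. f p = (\<Sum>j\<le>n. fs j p))
    \<and> (\<forall>k \<le> n div 2. \<exists>a :: (nat \<times> nat) list \<Rightarrow> real.
          \<forall>p \<in> Fn n. fs (2*k) p = (\<Sum>I \<in> Iset n k. a I * omegaI (snd p) I))
    \<and> (\<forall>k \<le> (n - 1) div 2. \<exists>b :: (nat \<times> nat) list \<Rightarrow> form1 \<Rightarrow> real.
          (\<forall>I \<in> Iset n k. lin1 n (b I)) \<and>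
          (\<forall>p \<in> Fn n. fs (2*k+1) p = (\<Sum>I \<in> Iset n k. b I (fst p) * omegaI (snd p) I)))"
proof (intro exI[of _ "dil_coeff f n"] conjI allI ballI impI)
  note f = assms(2)
  show "f (dil t p) = (\<Sum>j\<le>n. dil_coeff f n j p * t ^ j)" if "p \<in> Fn n" for p t
    by (rule Ah_dil_polynomial[OF f that])
  show "Ah n (dil_coeff f n j)" if "j \<le> n" for j
    by (rule Ah_dil_coeff[OF f that])
  show "f p = (\<Sum>j\<le>n. dil_coeff f n j p)" if "p \<in> Fn n" for p
    using Ah_dil_polynomial[OF f that, of 1] by (cases p) (simp add: dil_def)
  show "\<exists>a. \<forall>p \<in> Fn n. dil_coeff f n (2*k) p = (\<Sum>I \<in> Iset n k. a I * omegaI (snd p) I)" for k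
    by (intro exI[of _ "\<lambda>I. omega_coeff f (\<lambda>i. 0) (set I)"]) (simp add: dil_coeff_even)
  show "\<exists>b. (\<forall>I \<in> Iset n k. lin1 n (b I)) \<and>
      (\<forall>p \<in> Fn n. dil_coeff f n (2*k+1) p = (\<Sum>I \<in> Iset n k. b I (fst p) * omegaI (snd p) I))" for k
    unfolding dil_coeff_odd using lin1_lin_coeff[OF f] IsetD(3)
    by (intro exI[of _ "\<lambda>I \<theta>. lin_coeff f \<theta> (set I)"]) (auto simp: matching_def)
qed

end
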